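(* For every $\delta$ with $0<\delta<\gamma$ there exists an integer $K\ge1$ such that for every positive integer $B$, every pre-sorted online $B$-bounded space algorithm $ALG$ for the classic bin packing problem, and every positive integer $m$, there exists a sorted item sequence $I$ such that $OPT(I)=m$ and $ALG(I)>(\gamma-\delta)\cdot OPT(I)-B(K-1)$.
   Context: Define $\pi_1=2$ and $\pi_{i+1}=\pi_i(\pi_i-1)+1$ for $i\ge1$, and $\gamma=\sum_{i=1}^\infty\frac{1}{\pi_i-1}\approx1.69$. Classic bin packing: an item sequence $I=(a_1,\dots,a_n)\in(0,1]^n$ must be packed into bins of capacity $1$; $OPT(I)$ is the minimum number of non-empty bins, $ALG(I)$ the number used by $ALG$. $I$ is sorted if $a_1\ge\cdots\ge a_n$. A pre-sorted online algorithm first sorts the input in non-increasing order and then repeatedly packs the head (first) item of the currently remaining sorted sequence into a bin, each decision depending only on the items already packed and the current item, without seeing other remaining items. A bin is open if it contains an item and the algorithm may still pack items into it; closed bins never receive further items. A $B$-bounded space algorithm keeps at most $B$ open bins at any time. *)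

theory Defs
  imports Complex_Main
begin

(* pi_seq i = \<pi>_{i+1}: pi_seq 0 = 2, pi_seq (i+1) = pi_seq i * (pi_seq i - 1) + 1 *)
fun pi_seq :: "nat \<Rightarrow> nat" where
  "pi_seq 0 = 2"
| "pi_seq (Suc i) = pi_seq i * (pi_seq i - 1) + 1"

definition gamma_bp :: real where
  "gamma_bp = (\<Sum>i. 1 / (real (pi_seq i) - 1))"

definition sorted_items :: "real list \<Rightarrow> bool" where
  "sorted_items I \<longleftrightarrow> (\<forall>x\<in>set I. 0 < x \<and> x \<le> 1) \<and> sorted_wrt (\<ge>) I"

definition valid_packing :: "real list \<Rightarrow> (nat \<Rightarrow> nat) \<Rightarrow> bool" where
  "valid_packing I f \<longleftrightarrow>
     (\<forall>b. (\<Sum>i\<in>{i. i < length I \<and> f i = b}. I ! i) \<le> 1)"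

definition OPT :: "real list \<Rightarrow> nat" where
  "OPT I = (LEAST k. \<exists>f. valid_packing I f \<and> card (f ` {..<length I}) = k)"

(* Given the items already packed (in order) and the current item, it returns
   (b, C): the bin label b receiving the current item and a set C of bin
   labels that it closes (after packing the current item).  Its previous
   decisions are determined by the prefix, so this captures exactly the
   information the algorithm may use. *)
type_synonym online_alg = "real list \<Rightarrow> real \<Rightarrow> nat \<times> nat set"

definition alg_bin :: "online_alg \<Rightarrow> real list \<Rightarrow> nat \<Rightarrow> nat" where
  "alg_bin A I i = fst (A (take i I) (I ! i))"

definition alg_closed :: "online_alg \<Rightarrow> real list \<Rightarrow> nat \<Rightarrow> nat set" where
  "alg_closed A I j = (\<Union>i<j. snd (A (take i I) (I ! i)))"

definition alg_open :: "online_alg \<Rightarrow> real list \<Rightarrow> nat \<Rightarrow> nat set" where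
  "alg_open A I j = (alg_bin A I ` {..<j}) - alg_closed A I j"

definition bounded_run :: "nat \<Rightarrow> online_alg \<Rightarrow> real list \<Rightarrow> bool" where
  "bounded_run B A I \<longleftrightarrow>
     (\<forall>i < length I.
        alg_bin A I i \<notin> alg_closed A I i
      \<and> (\<Sum>j\<in>{j. j \<le> i \<and> alg_bin A I j = alg_bin A I i}. I ! j) \<le> 1
      \<and> card (alg_open A I (Suc i)) \<le> B)"

definition presorted_bounded_alg :: "nat \<Rightarrow> online_alg \<Rightarrow> bool" where
  "presorted_bounded_alg B A \<longleftrightarrow> (\<forall>I. sorted_items I \<longrightarrow> bounded_run B A I)"

definition ALG :: "online_alg \<Rightarrow> real list \<Rightarrow> nat" where
  "ALG A I = card (alg_bin A I ` {..<length I})"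

end

theory Submission
  imports Defs
begin

(* The adversary presents k phases of m equal items, phase i consisting of items slightly larger
   than 1 / pi_seq i, the sizes being chosen so that one item of each phase fills a bin exactly.
   Packing the j-th item into bin j mod m gives OPT <= m, and OPT >= m as the first m items exceed 1/2.
   In phase i a bin takes at most pi_seq i - 1 items and at most B bins opened earlier are still
   open, so the algorithm opens at least m / (pi_seq i - 1) - B new bins.  Summing over the phases,
   ALG >= m * (sum of 1 / (pi_seq i - 1) for i < k) - B k, and these partial sums tend to gamma_bp. *)

lemma pi_seq_ge_two: "2 \<le> pi_seq i"
proof (induction i)
  case (Suc i)
  then have "2 * 1 \<le> pi_seq i * (pi_seq i - 1)" by (intro mult_le_mono) auto
  then show ?case using Suc by simp
qed simp

lemma pi_seq_Suc_minus_one: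
  "real (pi_seq (Suc i)) - 1 = real (pi_seq i) * (real (pi_seq i) - 1)"
  using pi_seq_ge_two[of i] by (simp add: of_nat_diff)

lemma mono_pi_seq: "mono pi_seq"
unfolding mono_iff_le_Suc
proof
  fix i
  have "real (pi_seq i) * 1 \<le> real (pi_seq i) * (real (pi_seq i) - 1)"
    using pi_seq_ge_two[of i] by (intro mult_left_mono) auto
  then have "real (pi_seq i) \<le> real (pi_seq (Suc i))"
    using pi_seq_Suc_minus_one[of i] by linarith
  then show "pi_seq i \<le> pi_seq (Suc i)" by (simp del: pi_seq.simps)
qed

lemma two_power_le_pi_seq: "2 ^ i \<le> real (pi_seq i) - 1"
proof (induction i)
  case (Suc i)
  have "(2::real) ^ Suc i \<le> real (pi_seq i) * (real (pi_seq i) - 1)"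
    using Suc pi_seq_ge_two[of i] by (simp add: mult_mono)
  then show ?case by (simp only: pi_seq_Suc_minus_one)
qed simp

lemma summable_pi_seq_reciprocals: "summable (\<lambda>i. 1 / (real (pi_seq i) - 1))"
proof (rule summable_comparison_test')
  show "summable (\<lambda>i. (1/2::real) ^ i)" by simp
  fix i
  have "1 / (real (pi_seq i) - 1) \<le> 1 / 2 ^ i"
    using two_power_le_pi_seq[of i] by (intro frac_le) auto
  then show "norm (1 / (real (pi_seq i) - 1)) \<le> (1/2) ^ i"
    using pi_seq_ge_two[of i] by (simp add: power_one_over)
qed

lemma sum_inverse_pi_seq: "(\<Sum>i<k. 1 / real (pi_seq i)) = 1 - 1 / (real (pi_seq k) - 1)"
proof (induction k)
  case (Suc k)
  have "real (pi_seq k) \<ge> 2" using pi_seq_ge_two[of k] by simp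
  then have "1 - 1 / (real (pi_seq k) - 1) + 1 / real (pi_seq k)
      = 1 - 1 / (real (pi_seq k) * (real (pi_seq k) - 1))"
    by (simp add: field_simps)
  then show ?case using Suc by (simp only: sum.lessThan_Suc pi_seq_Suc_minus_one)
qed simp

lemma gamma_bp_less_partial_sum:
  assumes "0 < \<delta>"
  obtains k where "k \<ge> 1" "gamma_bp - \<delta> < (\<Sum>i<k. 1 / (real (pi_seq i) - 1))"
proof -
  have "(\<lambda>n. \<Sum>i<n. 1 / (real (pi_seq i) - 1)) \<longlonglongrightarrow> gamma_bp"
    unfolding gamma_bp_def by (rule summable_LIMSEQ[OF summable_pi_seq_reciprocals])
  then have "\<forall>\<^sub>F n in sequentially. gamma_bp - \<delta> < (\<Sum>i<n. 1 / (real (pi_seq i) - 1))"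
    by (rule order_tendstoD) (use assms in simp)
  then obtain N where "\<forall>n\<ge>N. gamma_bp - \<delta> < (\<Sum>i<n. 1 / (real (pi_seq i) - 1))"
    by (auto simp: eventually_at_top_linorder)
  then show ?thesis using that[of "Suc N"] by (simp del: sum.lessThan_Suc)
qed

definition new_bins :: "online_alg \<Rightarrow> real list \<Rightarrow> nat \<Rightarrow> nat \<Rightarrow> nat set" where
  "new_bins A I t u = alg_bin A I ` {t..<u} - alg_bin A I ` {..<t}"

lemma alg_closed_mono: "j \<le> j' \<Longrightarrow> alg_closed A I j \<subseteq> alg_closed A I j'"
  unfolding alg_closed_def by (intro UN_mono) auto

lemma card_alg_open_le:
  assumes "bounded_run B A I" "n \<le> length I"
  shows "card (alg_open A I n) \<le> B"
proof (cases n)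
  case 0
  then show ?thesis by (simp add: alg_open_def)
next
  case (Suc n')
  then show ?thesis using assms unfolding bounded_run_def by auto
qed

lemma alg_bin_in_alg_open:
  assumes "bounded_run B A I" "j < length I" "t \<le> j"
    and "alg_bin A I j \<in> alg_bin A I ` {..<t}"
  shows "alg_bin A I j \<in> alg_open A I t"
proof -
  have "alg_bin A I j \<notin> alg_closed A I j" using assms(1,2) unfolding bounded_run_def by blast
  then show ?thesis using alg_closed_mono[OF assms(3)] assms(4) unfolding alg_open_def by blast
qed

lemma sum_items_in_alg_bin_le_one:
  assumes "bounded_run B A I" "\<forall>x\<in>set I. 0 \<le> x"
    and "F \<subseteq> {..<length I}" "\<forall>j\<in>F. alg_bin A I j = b"
  shows "(\<Sum>j\<in>F. I ! j) \<le> 1"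
proof (cases "F = {}")
  case False
  have "finite F" using assms(3) finite_subset by blast
  define l where "l = Max F"
  have l: "l \<in> F" "l < length I"
    using Max_in[OF \<open>finite F\<close> False] assms(3) unfolding l_def by auto
  let ?bin = "{j. j \<le> l \<and> alg_bin A I j = alg_bin A I l}"
  have "F \<subseteq> ?bin" using assms(4) l \<open>finite F\<close> unfolding l_def by auto
  then have "(\<Sum>j\<in>F. I ! j) \<le> (\<Sum>j\<in>?bin. I ! j)"
    using assms(2) l(2) by (intro sum_mono2) auto
  also have "\<dots> \<le> 1" using assms(1) l(2) unfolding bounded_run_def by blast
  finally show ?thesis .
qed simp

text \<open>A bin holds at most q items larger than 1 / (q + 1), and the only bins that are not new
  but can still receive items of the phase are the at most B bins open when it starts.\<close>
lemma card_new_bins_lower_bound: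
  assumes run: "bounded_run B A I" and nonneg: "\<forall>x\<in>set I. 0 \<le> x" and "t \<le> u" "u \<le> length I"
    and equal: "\<forall>j\<in>{t..<u}. I ! j = x" and large: "1 < real (Suc q) * x"
  shows "u - t \<le> q * (card (new_bins A I t u) + B)"
proof -
  let ?P = "{t..<u}"
  have P: "j < length I" if "j \<in> ?P" for j using that \<open>u \<le> length I\<close> by auto
  have "0 < real (Suc q) * x" using large by linarith
  then have "x > 0" by (simp add: zero_less_mult_iff)
  have fiber: "card {j\<in>?P. alg_bin A I j = b} \<le> q" for b
  proof -
    have "real (card {j\<in>?P. alg_bin A I j = b}) * x = (\<Sum>j\<in>{j\<in>?P. alg_bin A I j = b}. I ! j)"
      using equal by simp
    also have "\<dots> \<le> 1" using P by (intro sum_items_in_alg_bin_le_one[OF run nonneg, where b = b]) auto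
    finally have "real (card {j\<in>?P. alg_bin A I j = b}) * x < real (Suc q) * x"
      using large by linarith
    then have "real (card {j\<in>?P. alg_bin A I j = b}) < real (Suc q)"
      using \<open>x > 0\<close> by (rule mult_right_less_imp_less[OF _ less_imp_le])
    then show ?thesis by simp
  qed
  have bins: "alg_bin A I ` ?P \<subseteq> new_bins A I t u \<union> alg_open A I t"
  proof
    fix b assume "b \<in> alg_bin A I ` ?P"
    then obtain j where j: "j \<in> ?P" "b = alg_bin A I j" by blast
    then show "b \<in> new_bins A I t u \<union> alg_open A I t"
      using alg_bin_in_alg_open[OF run P[OF j(1)]] unfolding new_bins_def by auto
  qed
  have "u - t = card ?P" by simp
  also have "?P = (\<Union>b\<in>alg_bin A I ` ?P. {j\<in>?P. alg_bin A I j = b})" by blast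
  also have "card \<dots> \<le> (\<Sum>b\<in>alg_bin A I ` ?P. card {j\<in>?P. alg_bin A I j = b})"
    by (rule card_UN_le) simp
  also have "\<dots> \<le> (\<Sum>b\<in>alg_bin A I ` ?P. q)"
    using fiber by (rule sum_mono)
  also have "\<dots> = q * card (alg_bin A I ` ?P)" by simp
  also have "card (alg_bin A I ` ?P) \<le> card (new_bins A I t u \<union> alg_open A I t)"
    using bins by (intro card_mono) (simp_all add: new_bins_def alg_open_def)
  also have "\<dots> \<le> card (new_bins A I t u) + card (alg_open A I t)"
    by (rule card_Un_le)
  also have "card (alg_open A I t) \<le> B"
    using card_alg_open_le[OF run] \<open>t \<le> u\<close> \<open>u \<le> length I\<close> by simp
  finally show ?thesis by simp
qed

lemma card_alg_bin_image_split:
  assumes "t \<le> u"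
  shows "card (alg_bin A I ` {..<u}) = card (alg_bin A I ` {..<t}) + card (new_bins A I t u)"
proof -
  have "{..<u} = {..<t} \<union> {t..<u}" using assms by auto
  then have "alg_bin A I ` {..<u} = alg_bin A I ` {..<t} \<union> new_bins A I t u"
    unfolding new_bins_def by auto
  moreover have "alg_bin A I ` {..<t} \<inter> new_bins A I t u = {}"
    unfolding new_bins_def by blast
  moreover have "finite (new_bins A I t u)" unfolding new_bins_def by simp
  ultimately show ?thesis by (simp add: card_Un_disjoint)
qed

lemma card_alg_bin_image_phases:
  "card (alg_bin A I ` {..<k * m}) = (\<Sum>i<k. card (new_bins A I (i * m) (i * m + m)))"
proof (induction k)
  case (Suc k)
  have "card (alg_bin A I ` {..<Suc k * m})
      = card (alg_bin A I ` {..<k * m}) + card (new_bins A I (k * m) (k * m + m))"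
    using card_alg_bin_image_split[of "k * m" "k * m + m"] by (simp add: add.commute)
  then show ?case using Suc by simp
qed simp

lemma OPT_le_card_bins:
  "valid_packing I f \<Longrightarrow> OPT I \<le> card (f ` {..<length I})"
  unfolding OPT_def by (rule Least_le) blast

lemma card_bins_ge_large_prefix:
  assumes "valid_packing I f" "\<forall>x\<in>set I. 0 \<le> x"
    and "m \<le> length I" "\<forall>j<m. 1/2 < I ! j"
  shows "m \<le> card (f ` {..<length I})"
proof -
  have "inj_on f {..<m}"
  proof (rule inj_onI, rule ccontr)
    fix j j' assume j: "j \<in> {..<m}" "j' \<in> {..<m}" "f j = f j'" "j \<noteq> j'"
    then have "I ! j + I ! j' = (\<Sum>i\<in>{j, j'}. I ! i)" by simp
    also have "\<dots> \<le> (\<Sum>i\<in>{i. i < length I \<and> f i = f j}. I ! i)"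
      using j assms(2,3) by (intro sum_mono2) auto
    also have "\<dots> \<le> 1" using assms(1) unfolding valid_packing_def by blast
    finally have "I ! j + I ! j' \<le> 1" .
    moreover have "1/2 < I ! j" "1/2 < I ! j'" using j assms(4) by auto
    ultimately show False by linarith
  qed
  then have "m = card (f ` {..<m})" by (simp add: card_image)
  also have "\<dots> \<le> card (f ` {..<length I})"
    using assms(3) by (intro card_mono image_mono) auto
  finally show ?thesis .
qed

lemma OPT_eq_of_large_prefix:
  assumes "valid_packing I f" "card (f ` {..<length I}) = m" "\<forall>x\<in>set I. 0 \<le> x"
    and "m \<le> length I" "\<forall>j<m. 1/2 < I ! j"
  shows "OPT I = m"
proof (rule antisym)
  show "OPT I \<le> m" using OPT_le_card_bins[OF assms(1)] assms(2) by simp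
  obtain g where "valid_packing I g" "card (g ` {..<length I}) = OPT I"
    using LeastI_ex[of "\<lambda>k. \<exists>f. valid_packing I f \<and> card (f ` {..<length I}) = k"] assms(1)
    unfolding OPT_def by blast
  then show "m \<le> OPT I" using card_bins_ge_large_prefix assms(3-5) by metis
qed

lemma mod_eq_lessThan_mult:
  fixes b k m :: nat
  assumes "b < m"
  shows "{j. j < k * m \<and> j mod m = b} = (\<lambda>t. t * m + b) ` {..<k}"
proof (intro subset_antisym subsetI)
  fix j assume "j \<in> {j. j < k * m \<and> j mod m = b}"
  then have "j < k * m" "j mod m = b" by auto
  then have "j = j div m * m + b" "j div m < k"
    using div_mult_mod_eq[of j m] less_mult_imp_div_less by auto
  then show "j \<in> (\<lambda>t. t * m + b) ` {..<k}" by blast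
next
  fix j assume "j \<in> (\<lambda>t. t * m + b) ` {..<k}"
  then obtain t where "t < k" "j = t * m + b" by blast
  moreover have "t * m + m \<le> k * m" using \<open>t < k\<close> by (metis mult_Suc mult_le_mono1 Suc_leI add.commute)
  ultimately show "j \<in> {j. j < k * m \<and> j mod m = b}" using assms by simp
qed

text \<open>The slack 1 / (pi_seq k - 1) left over by sum_inverse_pi_seq is spread evenly over the
  k sizes: one item of each size then fills a bin exactly, while pi_seq i items of size i overflow it.\<close>
definition adversary_item :: "nat \<Rightarrow> nat \<Rightarrow> real" where
  "adversary_item k i = 1 / real (pi_seq i) + 1 / (real k * (real (pi_seq k) - 1))"

definition adversary_seq :: "nat \<Rightarrow> nat \<Rightarrow> real list" where
  "adversary_seq k m = map (\<lambda>j. adversary_item k (j div m)) [0..<k * m]"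

lemma adversary_item_gt:
  assumes "k \<ge> 1"
  shows "1 / real (pi_seq i) < adversary_item k i"
  using assms pi_seq_ge_two[of k] unfolding adversary_item_def by simp

lemma adversary_item_pos: "k \<ge> 1 \<Longrightarrow> 0 < adversary_item k i"
  using adversary_item_gt[of k i] pi_seq_ge_two[of i] by (simp add: less_trans[rotated])

lemma adversary_item_le_one:
  assumes "k \<ge> 1"
  shows "adversary_item k i \<le> 1"
proof -
  have "1 / real (pi_seq i) \<le> 1 / 2" using pi_seq_ge_two[of i] by simp
  moreover have "2 \<le> real (pi_seq k) - 1"
    using assms two_power_le_pi_seq[of k] power_increasing[of 1 k "2::real"] by simp
  then have "1 * 2 \<le> real k * (real (pi_seq k) - 1)"
    using assms by (intro mult_mono) auto
  then have "1 / (real k * (real (pi_seq k) - 1)) \<le> 1 / 2" by (intro frac_le) auto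
  ultimately show ?thesis unfolding adversary_item_def by simp
qed

lemma adversary_item_antimono: "i \<le> i' \<Longrightarrow> adversary_item k i' \<le> adversary_item k i"
  using monoD[OF mono_pi_seq] pi_seq_ge_two[of i] unfolding adversary_item_def
  by (simp add: frac_le)

lemma sum_adversary_item:
  assumes "k \<ge> 1"
  shows "(\<Sum>i<k. adversary_item k i) = 1"
proof -
  have "real (pi_seq k) \<ge> 2" using pi_seq_ge_two[of k] by simp
  then have "(\<Sum>i<k. 1 / (real k * (real (pi_seq k) - 1))) = 1 / (real (pi_seq k) - 1)"
    using assms by simp
  then show ?thesis
    using sum_inverse_pi_seq[of k] unfolding adversary_item_def sum.distrib by simp
qed

lemma length_adversary_seq: "length (adversary_seq k m) = k * m"
  unfolding adversary_seq_def by simp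

lemma nth_adversary_seq: "j < k * m \<Longrightarrow> adversary_seq k m ! j = adversary_item k (j div m)"
  unfolding adversary_seq_def by simp

lemma sorted_items_adversary_seq:
  assumes "k \<ge> 1"
  shows "sorted_items (adversary_seq k m)"
  unfolding sorted_items_def
proof
  show "\<forall>x\<in>set (adversary_seq k m). 0 < x \<and> x \<le> 1"
    using adversary_item_pos[OF assms] adversary_item_le_one[OF assms]
    unfolding adversary_seq_def by auto
  show "sorted_wrt (\<ge>) (adversary_seq k m)"
    unfolding sorted_wrt_iff_nth_less length_adversary_seq
    by (auto simp: nth_adversary_seq intro!: adversary_item_antimono div_le_mono)
qed

lemma valid_packing_adversary_seq:
  assumes "k \<ge> 1"
  shows "valid_packing (adversary_seq k m) (\<lambda>j. j mod m)"
  unfolding valid_packing_def length_adversary_seq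
proof
  fix b
  show "(\<Sum>j\<in>{j. j < k * m \<and> j mod m = b}. adversary_seq k m ! j) \<le> 1"
  proof (cases "b < m")
    case True
    have "inj_on (\<lambda>t. t * m + b) {..<k}" using True by (auto intro: inj_onI)
    then have "(\<Sum>j\<in>{j. j < k * m \<and> j mod m = b}. adversary_seq k m ! j)
        = (\<Sum>t<k. adversary_seq k m ! (t * m + b))"
      using True by (simp add: mod_eq_lessThan_mult sum.reindex)
    also have "\<dots> = (\<Sum>t<k. adversary_item k t)"
    proof (rule sum.cong)
      fix t assume "t \<in> {..<k}"
      then have "t * m + b < k * m" using mod_eq_lessThan_mult[OF True, of k] by blast
      then show "adversary_seq k m ! (t * m + b) = adversary_item k t"
        using True by (simp add: nth_adversary_seq)
    qed simp
    finally show ?thesis using sum_adversary_item[OF assms] by simp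
  next
    case False
    have "j mod m < m" if "j < k * m" for j using that by (cases "m = 0") auto
    then have "{j. j < k * m \<and> j mod m = b} = {}" using False by force
    then show ?thesis by (simp only: sum.empty)
  qed
qed

lemma OPT_adversary_seq:
  assumes "k \<ge> 1" "m > 0"
  shows "OPT (adversary_seq k m) = m"
proof (rule OPT_eq_of_large_prefix[OF valid_packing_adversary_seq[OF assms(1)]])
  have "m \<le> k * m" using assms by simp
  then show "m \<le> length (adversary_seq k m)" by (simp add: length_adversary_seq)
  have "(\<lambda>j. j mod m) ` {..<k * m} = {..<m}"
  proof (intro subset_antisym subsetI)
    fix b assume "b \<in> {..<m}"
    moreover have "b < k * m" using \<open>b \<in> {..<m}\<close> \<open>m \<le> k * m\<close> by (meson lessThan_iff less_le_trans)
    ultimately show "b \<in> (\<lambda>j. j mod m) ` {..<k * m}" by (intro image_eqI[of _ _ b]) auto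
  qed (use assms(2) in auto)
  then show "card ((\<lambda>j. j mod m) ` {..<length (adversary_seq k m)}) = m"
    by (simp add: length_adversary_seq)
  show "\<forall>x\<in>set (adversary_seq k m). 0 \<le> x"
    using adversary_item_pos[OF assms(1)] by (auto simp: adversary_seq_def less_imp_le)
  show "\<forall>j<m. 1/2 < adversary_seq k m ! j"
  proof (intro allI impI)
    fix j assume "j < m"
    then have "j < k * m" using \<open>m \<le> k * m\<close> by (meson less_le_trans)
    then show "1/2 < adversary_seq k m ! j"
      using \<open>j < m\<close> adversary_item_gt[OF assms(1), of 0] by (simp add: nth_adversary_seq)
  qed
qed

lemma ALG_adversary_seq_ge:
  assumes alg: "presorted_bounded_alg B A" and "k \<ge> 1"
  shows "real m * (\<Sum>i<k. 1 / (real (pi_seq i) - 1)) - real B * real k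
    \<le> real (ALG A (adversary_seq k m))"
proof -
  let ?I = "adversary_seq k m"
  have run: "bounded_run B A ?I"
    using alg sorted_items_adversary_seq[OF \<open>k \<ge> 1\<close>] unfolding presorted_bounded_alg_def by blast
  have nonneg: "\<forall>x\<in>set ?I. 0 \<le> x"
    using adversary_item_pos[OF \<open>k \<ge> 1\<close>] by (auto simp: adversary_seq_def less_imp_le)
  have phase: "real m / (real (pi_seq i) - 1) - real B
      \<le> real (card (new_bins A ?I (i * m) (i * m + m)))" if "i < k" for i
  proof -
    have "i * m + m \<le> k * m" using that by (metis mult_Suc mult_le_mono1 Suc_leI add.commute)
    then have equal: "\<forall>j\<in>{i * m..<i * m + m}. ?I ! j = adversary_item k i"
      by (auto simp: nth_adversary_seq algebra_simps intro!: arg_cong[where f = "adversary_item k"] div_nat_eqI)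
    have "real (pi_seq i) \<ge> 2" using pi_seq_ge_two[of i] by simp
    then have large: "1 < real (Suc (pi_seq i - 1)) * adversary_item k i"
      using adversary_item_gt[OF \<open>k \<ge> 1\<close>, of i]
      by (simp add: Suc_diff_1 divide_less_eq mult.commute)
    then have "(i * m + m) - i * m \<le> (pi_seq i - 1) * (card (new_bins A ?I (i * m) (i * m + m)) + B)"
      using card_new_bins_lower_bound[OF run nonneg _ _ equal large] \<open>i * m + m \<le> k * m\<close>
      by (simp add: length_adversary_seq)
    then have "real m \<le> real ((pi_seq i - 1) * (card (new_bins A ?I (i * m) (i * m + m)) + B))"
      by (simp only: of_nat_le_iff)
    then have "real m \<le> (real (pi_seq i) - 1) * (real (card (new_bins A ?I (i * m) (i * m + m))) + real B)"
      using pi_seq_ge_two[of i] by (simp add: of_nat_diff)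
    then have "real m / (real (pi_seq i) - 1)
        \<le> real (card (new_bins A ?I (i * m) (i * m + m))) + real B"
      using \<open>real (pi_seq i) \<ge> 2\<close> by (simp add: pos_divide_le_eq mult.commute)
    then show ?thesis by simp
  qed
  have "real m * (\<Sum>i<k. 1 / (real (pi_seq i) - 1)) - real B * real k
      = (\<Sum>i<k. real m / (real (pi_seq i) - 1) - real B)"
    by (simp add: sum_subtractf sum_distrib_left)
  also have "\<dots> \<le> (\<Sum>i<k. real (card (new_bins A ?I (i * m) (i * m + m))))"
    using phase by (intro sum_mono) simp
  also have "\<dots> = real (ALG A ?I)"
    unfolding ALG_def length_adversary_seq card_alg_bin_image_phases by simp
  finally show ?thesis .
qed

theorem theorem6:
  fixes \<delta> :: real
  assumes "0 < \<delta>" and "\<delta> < gamma_bp"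
  shows "\<exists>K::nat. K \<ge> 1 \<and>
           (\<forall>B::nat. B > 0 \<longrightarrow>
             (\<forall>A. presorted_bounded_alg B A \<longrightarrow>
               (\<forall>m::nat. m > 0 \<longrightarrow>
                 (\<exists>I. sorted_items I \<and> OPT I = m \<and>
                   real (ALG A I) > (gamma_bp - \<delta>) * real (OPT I) - real B * (real K - 1)))))"
proof -
  obtain k where k: "k \<ge> 1" "gamma_bp - \<delta> < (\<Sum>i<k. 1 / (real (pi_seq i) - 1))"
    using gamma_bp_less_partial_sum[OF assms(1)] by blast
  show ?thesis
  proof (intro exI[of _ "Suc k"] conjI allI impI)
    fix B A and m :: nat
    assume "presorted_bounded_alg B A" "m > 0"
    have "(gamma_bp - \<delta>) * real m < real m * (\<Sum>i<k. 1 / (real (pi_seq i) - 1))"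
      using k(2) \<open>m > 0\<close> by (simp add: mult.commute)
    also have "\<dots> \<le> real (ALG A (adversary_seq k m)) + real B * real k"
      using ALG_adversary_seq_ge[OF \<open>presorted_bounded_alg B A\<close> k(1), of m] by simp
    finally show "\<exists>I. sorted_items I \<and> OPT I = m \<and>
        real (ALG A I) > (gamma_bp - \<delta>) * real (OPT I) - real B * (real (Suc k) - 1)"
      using sorted_items_adversary_seq[OF k(1)] OPT_adversary_seq[OF k(1) \<open>m > 0\<close>]
      by (intro exI[of _ "adversary_seq k m"]) simp
  qed simp
qed

end
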